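(* Suppose Assumption 1 holds with $\alpha\in(0,1]$, and let $\beta\in(0,1]$. Let $(f_t)_{t\in\mathbb N}$ be the online gradient descent iterates. Then for every $t\in\mathbb N$, $$\mathbb E_{z_t}\big[|\phi'(y_t,f_t(x_t))|^{1+\beta}\big]\le 2^{\beta}L^{1/\alpha}(1+\beta)\big[\mathcal E(f_t)-\mathcal E(f_H)\big]+\frac{2^\beta(1-\alpha\beta)}{1+\alpha}+2^\beta\,\mathbb E_{z_t}\big[|\phi'(y_t,f_H(x_t))|^{1+\beta}\big].$$
   Context: Setting: Let $\mathcal X\subset\mathbb R^d$, $\mathcal Y\subset\mathbb R$, $\mathcal Z=\mathcal X\times\mathcal Y$, and let $\rho$ be a Borel probability measure on $\mathcal Z$. Let $K:\mathcal X\times\mathcal X\to\mathbb R$ be a continuous, symmetric, positive semi-definite kernel with reproducing kernel Hilbert space $H_K$ (inner product $\langle\cdot,\cdot\rangle$, norm $\|\cdot\|$), $K_x:=K(x,\cdot)$, reproducing property $f(x)=\langle f,K_x\rangle$, and $\kappa:=\sup_{x\in\mathcal X}\sqrt{K(x,x)}<\infty$. Let $\phi:\mathcal Y\times\mathbb R\to[0,\infty)$ be a loss function, differentiable in its second argument, and write $\phi'(y,s)$ for its derivative with respect to $s$. The generalization error of $f:\mathcal X\to\mathbb R$ is $\mathcal E(f)=\int_{\mathcal Z}\phi(y,f(x))\,d\rho(x,y)$. It is assumed that a minimizer $f_H\in\arg\min_{f\in H_K}\mathcal E(f)$ exists and that $\max\{\sup_{y\in\mathcal Y}\phi(y,0),\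 \sup_{(x,y)\in\mathcal Z}\phi(y,f_H(x))\}<\infty$. Let $z_t=(x_t,y_t)$, $t\in\mathbb N$, be i.i.d. samples from $\rho$, let $(\eta_t)_{t\in\mathbb N}$ be positive step sizes, and define the online gradient descent iterates by $f_1=0$ and $f_{t+1}=f_t-\eta_t\phi'(y_t,f_t(x_t))K_{x_t}$ for $t\in\mathbb N$ (so $f_t$ depends only on $z_1,\dots,z_{t-1}$). Assumption 1: for every $y\in\mathcal Y$, $\phi(y,\cdot)$ is convex and differentiable, and there are constants $\alpha\in(0,1]$, $L>0$ with $|\phi'(y,s)-\phi'(y,\tilde s)|\le L|s-\tilde s|^{\alpha}$ for all $s,\tilde s\in\mathbb R$, $y\in\mathcal Y$. $\mathbb E_{z_t}[\cdot]$ denotes the conditional expectation with respect to $z_t$ given $z_1,\dots,z_{t-1}$ (i.e. integrating only over $z_t\sim\rho$, with $f_t$ fixed). *)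

theory Defs
  imports "HOL-Probability.Probability"
begin

definition gen_err :: "('a \<times> real) measure \<Rightarrow> (real \<Rightarrow> real \<Rightarrow> real) \<Rightarrow> ('a \<Rightarrow> real) \<Rightarrow> real" where
  "gen_err \<rho> \<phi> f = (\<integral>z. \<phi> (snd z) (f (fst z)) \<partial>\<rho>)"

text \<open>Online gradient descent iterates, indexed from 1:
  f_1 = 0,  f_(t+1) = f_t - eta_t * phi'(y_t, f_t(x_t)) * K_(x_t)  for t >= 1.
  Index 0 is an unused dummy (set to 0).\<close>
primrec ogd :: "('a \<Rightarrow> 'a \<Rightarrow> real) \<Rightarrow> (real \<Rightarrow> real \<Rightarrow> real) \<Rightarrow> (nat \<Rightarrow> real)
                 \<Rightarrow> (nat \<Rightarrow> 'a \<times> real) \<Rightarrow> nat \<Rightarrow> 'a \<Rightarrow> real" where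
  "ogd K \<phi>' \<eta> z 0 = (\<lambda>x. 0)"
| "ogd K \<phi>' \<eta> z (Suc t) =
     (if t = 0 then (\<lambda>x. 0)
      else (\<lambda>x. ogd K \<phi>' \<eta> z t x
                 - \<eta> t * \<phi>' (snd (z t)) (ogd K \<phi>' \<eta> z t (fst (z t))) * K (fst (z t)) x))"

end

theory Submission
  imports Defs
begin

text \<open>H\<ouml>lder continuity of \<open>\<phi>'\<close> gives the descent inequality
  \<open>\<phi>(s') \<le> \<phi>(s) + \<phi>'(s)(s' - s) + L|s' - s|^(1+\<alpha>)/(1+\<alpha>)\<close>. Together with convexity,
  one well-chosen descent step bounds \<open>|\<phi>'(s) - \<phi>'(r)|^((1+\<alpha>)/\<alpha>)\<close> by
  \<open>L^(1/\<alpha>)(1+\<alpha>)/\<alpha>\<close> times the Bregman distance \<open>\<phi>(s) - \<phi>(r) - \<phi>'(r)(s - r)\<close>.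
  Raising this to the power \<open>\<theta> = \<alpha>(1+\<beta>)/(1+\<alpha>) \<le> 1\<close>, with \<open>u^\<theta> \<le> \<theta>u + 1 - \<theta>\<close> and
  \<open>|a + b|^(1+\<beta>) \<le> 2^\<beta>(|a|^(1+\<beta>) + |b|^(1+\<beta>))\<close>, yields a pointwise bound for
  \<open>s = f(x)\<close>, \<open>r = f_H(x)\<close>. After integration the linear part of the Bregman distance
  vanishes: \<open>f_H\<close> minimizes the risk over the linear space \<open>H_K\<close>, so the expected derivative
  at \<open>f_H\<close> is orthogonal to every direction. The bound holds for every \<open>f \<in> H_K\<close>;
  nothing about the iterates is used beyond \<open>f_t \<in> H_K\<close>.\<close>

lemma holder_descent_right:
  fixes f f' :: "real \<Rightarrow> real"
  assumes d: "\<And>u. (f has_real_derivative f' u) (at u)"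
    and h: "\<And>u v. \<bar>f' u - f' v\<bar> \<le> L * \<bar>u - v\<bar> powr a"
    and a: "0 < a" and s: "s \<le> s'"
  shows "f s' \<le> f s + f' s * (s' - s) + L * \<bar>s' - s\<bar> powr (1 + a) / (1 + a)"
proof (cases "s = s'")
  case True then show ?thesis by simp
next
  case False
  with s have lt: "s < s'" by simp
  define \<psi> where "\<psi> u = f u - f s - f' s * (u - s) - L * (u - s) powr (1 + a) / (1 + a)" for u
  have cf: "continuous_on {s..s'} f"
    using d by (meson DERIV_isCont continuous_at_imp_continuous_on)
  have cp: "continuous_on {s..s'} (\<lambda>u. (u - s) powr (1 + a))"
    using a by (intro continuous_on_powr' continuous_intros) auto
  have c: "continuous_on {s..s'} \<psi>"
    unfolding \<psi>_def
    by (intro continuous_on_diff continuous_on_mult continuous_on_const continuous_on_id cf cp continuous_on_divide) (use a in auto)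
  have D: "(\<psi> has_real_derivative (f' u - f' s - L * (u - s) powr a)) (at u)" if "s < u" for u
  proof -
    have "((\<lambda>u. (u - s) powr (1 + a)) has_real_derivative (1 + a) * (u - s) powr a) (at u)"
      using that by (auto intro!: derivative_eq_intros)
    then show ?thesis
      unfolding \<psi>_def using a that
      by (auto intro!: derivative_eq_intros d)
  qed
  obtain l x where x: "s < x" "x < s'" and Dx: "DERIV \<psi> x :> l" and eq: "\<psi> s' - \<psi> s = (s' - s) * l"
    using MVT[OF lt c] D by (meson differentiable_def real_differentiable_def)
  have "l = f' x - f' s - L * (x - s) powr a"
    using DERIV_unique[OF Dx D[OF x(1)]] .
  moreover have "f' x - f' s \<le> L * (x - s) powr a"
    using h[of x s] x by auto
  ultimately have "l \<le> 0" by simp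
  with eq lt have "\<psi> s' \<le> \<psi> s" by (smt (verit) mult_nonneg_nonpos)
  moreover have "\<psi> s = 0" unfolding \<psi>_def using a by simp
  ultimately show ?thesis unfolding \<psi>_def using s by simp
qed

lemma holder_descent:
  fixes f f' :: "real \<Rightarrow> real"
  assumes d: "\<And>u. (f has_real_derivative f' u) (at u)"
    and h: "\<And>u v. \<bar>f' u - f' v\<bar> \<le> L * \<bar>u - v\<bar> powr a"
    and a: "0 < a"
  shows "f s' \<le> f s + f' s * (s' - s) + L * \<bar>s' - s\<bar> powr (1 + a) / (1 + a)"
proof (cases "s \<le> s'")
  case True then show ?thesis using holder_descent_right[OF d h a] by blast
next
  case False
  define g where "g u = f (- u)" for u
  define g' where "g' u = - f' (- u)" for u
  have dg: "(g has_real_derivative g' u) (at u)" for u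
    unfolding g_def g'_def using DERIV_chain2[OF d[of "-u"] DERIV_minus[OF DERIV_ident]] by simp
  have hg: "\<bar>g' u - g' v\<bar> \<le> L * \<bar>u - v\<bar> powr a" for u v
    unfolding g'_def using h[of "-v" "-u"] by (simp add: abs_minus_commute)
  have "g (-s') \<le> g (-s) + g' (-s) * (-s' - -s) + L * \<bar>-s' - -s\<bar> powr (1 + a) / (1 + a)"
    using False by (intro holder_descent_right[OF dg hg a]) auto
  then show ?thesis unfolding g_def g'_def by (simp add: abs_minus_commute algebra_simps)
qed

lemma holder_deriv_diff_le_bregman:
  fixes f f' :: "real \<Rightarrow> real"
  assumes cv: "convex_on UNIV f"
    and d: "\<And>u. (f has_real_derivative f' u) (at u)"
    and h: "\<And>u v. \<bar>f' u - f' v\<bar> \<le> L * \<bar>u - v\<bar> powr a"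
    and a: "0 < a" and L: "0 < L"
  shows "\<bar>f' s - f' r\<bar> powr ((1 + a) / a) \<le> L powr (1 / a) * ((1 + a) / a) * (f s - f r - f' r * (s - r))"
proof -
  have tan: "f x - f r \<ge> f' r * (x - r)" for x
    using convex_on_imp_above_tangent[OF cv, of r x "f' r"] d[of r] by auto
  define dd where "dd = f' s - f' r"
  define D where "D = f s - f r - f' r * (s - r)"
  define \<delta> where "\<delta> = (\<bar>dd\<bar> / L) powr (1 / a)"
  \<comment> \<open>step from s against the sign of f' s - f' r, with the length at which the
      H\<ouml>lder remainder of the descent inequality balances the linear gain\<close>
  define hh where "hh = - sgn dd * \<delta>"
  have \<delta>0: "\<delta> \<ge> 0" unfolding \<delta>_def by simp
  have ahh: "\<bar>hh\<bar> = \<delta> \<or> dd = 0" unfolding hh_def using \<delta>0 by (cases dd "0::real" rule: linorder_cases) auto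
  have ddhh: "dd * hh = - \<bar>dd\<bar> * \<delta>" unfolding hh_def by (cases dd "0::real" rule: linorder_cases) auto
  have \<delta>a: "\<delta> powr a = \<bar>dd\<bar> / L"
    unfolding \<delta>_def using a L by (simp add: powr_powr)
  have \<delta>1a: "\<delta> powr (1 + a) = \<delta> * (\<bar>dd\<bar> / L)"
  proof (cases "\<delta> = 0")
    case True then show ?thesis using a by simp
  next
    case False then show ?thesis using \<delta>0 \<delta>a by (simp add: powr_add)
  qed
  have desc: "f (s + hh) \<le> f s + f' s * hh + L * \<bar>hh\<bar> powr (1 + a) / (1 + a)"
    using holder_descent[OF d h a, where s=s and s'="s + hh"] by simp
  have key: "0 \<le> D + dd * hh + L * \<bar>hh\<bar> powr (1 + a) / (1 + a)"
    using desc tan[of "s + hh"] unfolding D_def dd_def by (simp add: algebra_simps)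
  have D0: "D \<ge> 0" using tan[of s] unfolding D_def by simp
  show ?thesis
  proof (cases "dd = 0")
    case True
    then show ?thesis using D0 a L unfolding dd_def[symmetric] D_def[symmetric] by simp
  next
    case False
    with ahh have "\<bar>hh\<bar> = \<delta>" by simp
    with key ddhh \<delta>1a L have "0 \<le> D - \<bar>dd\<bar> * \<delta> + \<delta> * \<bar>dd\<bar> / (1 + a)" by simp
    then have k2: "\<bar>dd\<bar> * \<delta> * a / (1 + a) \<le> D" using a
      by (simp add: field_simps)
    have "\<bar>dd\<bar> powr ((1 + a) / a) = \<bar>dd\<bar> * \<bar>dd\<bar> powr (1 / a)"
      using False a by (simp add: add_divide_distrib powr_add)
    also have "\<bar>dd\<bar> powr (1 / a) = L powr (1 / a) * \<delta>"
      unfolding \<delta>_def using L by (simp add: powr_divide)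
    finally have "\<bar>dd\<bar> powr ((1 + a) / a) = L powr (1 / a) * (\<bar>dd\<bar> * \<delta>)" by simp
    also have "\<dots> \<le> L powr (1 / a) * ((1 + a) / a * D)"
      using k2 a by (intro mult_left_mono) (auto simp: field_simps)
    finally show ?thesis unfolding dd_def D_def by (simp add: mult.assoc)
  qed
qed

lemma abs_add_powr_le:
  fixes x y b :: real
  assumes b: "0 \<le> b"
  shows "\<bar>x + y\<bar> powr (1 + b) \<le> 2 powr b * (\<bar>x\<bar> powr (1 + b) + \<bar>y\<bar> powr (1 + b))"
proof (cases "x = 0 \<or> y = 0")
  case True
  have "1 \<le> (2::real) powr b" using b ge_one_powr_ge_zero by simp
  then show ?thesis using True
    mult_right_mono[of 1 "2 powr b" "\<bar>y\<bar> powr (1+b)"] mult_right_mono[of 1 "2 powr b" "\<bar>x\<bar> powr (1+b)"]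
    by auto
next
  case False
  define u where "u = \<bar>x\<bar>"
  define v where "v = \<bar>y\<bar>"
  have u: "u > 0" and v: "v > 0" using False unfolding u_def v_def by auto
  have cvx: "((1/2) * u + (1 - 1/2) * v) powr (1 + b) \<le> (1/2) * u powr (1 + b) + (1 - 1/2) * v powr (1 + b)"
    using convex_onD[OF powr_convex[of "1 + b"], of "1/2" u v] u v b by auto
  have "\<bar>x + y\<bar> powr (1 + b) \<le> (u + v) powr (1 + b)"
    unfolding u_def v_def using b by (intro powr_mono2) auto
  also have "(u + v) powr (1 + b) = 2 powr (1 + b) * ((1/2) * u + (1 - 1/2) * v) powr (1 + b)"
    using powr_mult[of 2 "(1/2) * u + (1 - 1/2) * v" "1 + b"] u v by simp
  also have "\<dots> \<le> 2 powr (1 + b) * ((1/2) * u powr (1 + b) + (1 - 1/2) * v powr (1 + b))"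
    using cvx by (intro mult_left_mono) auto
  also have "\<dots> = 2 powr b * (u powr (1 + b) + v powr (1 + b))"
    by (simp add: powr_add field_simps)
  finally show ?thesis unfolding u_def v_def .
qed

lemma powr_le_tangent_at_one:
  fixes u \<theta> :: real
  assumes "0 \<le> u" "0 < \<theta>" "\<theta> \<le> 1"
  shows "u powr \<theta> \<le> \<theta> * u + (1 - \<theta>)"
proof (cases "u = 0")
  case True then show ?thesis using assms by simp
next
  case False
  then show ?thesis using Youngs_inequality_0[of \<theta> "1 - \<theta>" u 1] assms by simp
qed

lemma holder_deriv_powr_le:
  fixes f f' :: "real \<Rightarrow> real"
  assumes cv: "convex_on UNIV f"
    and d: "\<And>u. (f has_real_derivative f' u) (at u)"
    and h: "\<And>u v. \<bar>f' u - f' v\<bar> \<le> L * \<bar>u - v\<bar> powr a"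
    and a: "0 < a" "a \<le> 1" and L: "0 < L" and b: "0 < b" "b \<le> 1"
  shows "\<bar>f' s\<bar> powr (1 + b) \<le> 2 powr b * L powr (1 / a) * (1 + b) * (f s - f r - f' r * (s - r))
           + 2 powr b * (1 - a * b) / (1 + a) + 2 powr b * \<bar>f' r\<bar> powr (1 + b)"
proof -
  define dd where "dd = f' s - f' r"
  define D where "D = f s - f r - f' r * (s - r)"
  define \<theta> where "\<theta> = a * (1 + b) / (1 + a)"
  have \<theta>: "0 < \<theta>" "\<theta> \<le> 1" unfolding \<theta>_def using a b by (auto simp: field_simps intro: mult_le_one add_pos_nonneg)
  have B: "\<bar>dd\<bar> powr ((1 + a) / a) \<le> L powr (1 / a) * ((1 + a) / a) * D"
    unfolding dd_def D_def by (rule holder_deriv_diff_le_bregman[OF cv d h a(1) L])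
  have "\<bar>dd\<bar> powr (1 + b) = (\<bar>dd\<bar> powr ((1 + a) / a)) powr \<theta>"
    unfolding \<theta>_def using a by (simp add: powr_powr)
  also have "\<dots> \<le> \<theta> * \<bar>dd\<bar> powr ((1 + a) / a) + (1 - \<theta>)"
    by (rule powr_le_tangent_at_one) (use \<theta> in auto)
  also have "\<dots> \<le> \<theta> * (L powr (1 / a) * ((1 + a) / a) * D) + (1 - \<theta>)"
    using B \<theta> by (intro add_right_mono mult_left_mono) auto
  also have "\<dots> = (\<theta> * ((1 + a) / a)) * L powr (1 / a) * D + (1 - \<theta>)"
    by (simp add: ac_simps)
  also have "\<theta> * ((1 + a) / a) = 1 + b"
  proof -
    have "a \<noteq> 0" "1 + a \<noteq> 0" using a by auto
    then show ?thesis unfolding \<theta>_def by simp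
  qed
  also have "1 - \<theta> = (1 - a * b) / (1 + a)" unfolding \<theta>_def using a by (simp add: field_simps)
  also have "(1 + b) * L powr (1 / a) * D = L powr (1 / a) * (1 + b) * D" by simp
  finally have E: "\<bar>dd\<bar> powr (1 + b) \<le> L powr (1 / a) * (1 + b) * D + (1 - a * b) / (1 + a)" .
  have "\<bar>f' s\<bar> powr (1 + b) \<le> 2 powr b * (\<bar>dd\<bar> powr (1 + b) + \<bar>f' r\<bar> powr (1 + b))"
    using abs_add_powr_le[of b dd "f' r"] b unfolding dd_def by simp
  also have "\<dots> \<le> 2 powr b * (L powr (1 / a) * (1 + b) * D + (1 - a * b) / (1 + a) + \<bar>f' r\<bar> powr (1 + b))"
    using E by (intro mult_left_mono) auto
  finally show ?thesis unfolding D_def by (simp add: algebra_simps)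
qed

lemma holder_descent_step_le:
  fixes f f' :: "real \<Rightarrow> real"
  assumes d: "\<And>u. (f has_real_derivative f' u) (at u)"
    and h: "\<And>u v. \<bar>f' u - f' v\<bar> \<le> L * \<bar>u - v\<bar> powr a"
    and a: "0 < a" and L: "0 \<le> L" and g: "\<bar>g\<bar> \<le> G" and \<epsilon>: "0 < \<epsilon>"
  shows "f (s + \<epsilon> * g) - f s - \<epsilon> * (f' s * g) \<le> \<epsilon> * (L * (\<epsilon> * G) powr a * G)"
proof -
  have eg: "\<bar>\<epsilon> * g\<bar> \<le> \<epsilon> * G"
    using g \<epsilon> by (simp add: abs_mult)
  have "\<bar>\<epsilon> * g\<bar> powr (1 + a) = \<bar>\<epsilon> * g\<bar> * \<bar>\<epsilon> * g\<bar> powr a"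
    by (simp add: powr_add)
  also have "\<dots> \<le> (\<epsilon> * G) * (\<epsilon> * G) powr a"
    using eg a by (intro mult_mono powr_mono2) auto
  finally have pow: "\<bar>\<epsilon> * g\<bar> powr (1 + a) \<le> (\<epsilon> * G) * (\<epsilon> * G) powr a" .
  have "L * \<bar>\<epsilon> * g\<bar> powr (1 + a) \<le> \<epsilon> * (L * (\<epsilon> * G) powr a * G)"
    using mult_left_mono[OF pow L] by (simp add: ac_simps)
  moreover have "L * \<bar>\<epsilon> * g\<bar> powr (1 + a) / (1 + a) \<le> L * \<bar>\<epsilon> * g\<bar> powr (1 + a)"
    using L a by (intro divide_left_mono[of 1 "1 + a", simplified]) auto
  moreover have "f (s + \<epsilon> * g) \<le> f s + \<epsilon> * (f' s * g) + L * \<bar>\<epsilon> * g\<bar> powr (1 + a) / (1 + a)"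
    using holder_descent[OF d h a, where s=s and s'="s + \<epsilon> * g"] by (simp add: ac_simps)
  ultimately show ?thesis by linarith
qed

lemma nonneg_holder_bounds:
  fixes f f' :: "real \<Rightarrow> real"
  assumes d: "\<And>u. (f has_real_derivative f' u) (at u)"
    and h: "\<And>u v. \<bar>f' u - f' v\<bar> \<le> L * \<bar>u - v\<bar> powr a"
    and a: "0 < a" and L: "0 \<le> L"
    and nonneg: "\<And>u. 0 \<le> f u" and f0: "f 0 \<le> B" and s: "\<bar>s\<bar> \<le> G"
  shows "\<bar>f' s\<bar> \<le> B + L + L * G powr a"
    and "\<bar>f s\<bar> \<le> B + (B + L) * G + L * G powr (1 + a)"
proof -
  have desc: "f v \<le> f 0 + f' 0 * v + L * \<bar>v\<bar> powr (1 + a) / (1 + a)" for v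
    using holder_descent[OF d h a, where s=0 and s'=v] by simp
  have La: "L / (1 + a) \<le> L" using L a by (simp add: field_simps)
  \<comment> \<open>\<open>f (\<plusminus>1) \<ge> 0\<close> and the descent inequality at 0\<close>
  have f'0: "\<bar>f' 0\<bar> \<le> B + L"
    using desc[of 1] desc[of "-1"] nonneg[of 1] nonneg[of "-1"] f0 La by simp
  have "\<bar>f' s - f' 0\<bar> \<le> L * G powr a"
    using h[of s 0] mult_left_mono[OF powr_mono2[OF _ _ s], of a L] a L by simp
  then show "\<bar>f' s\<bar> \<le> B + L + L * G powr a"
    using f'0 by linarith
  have "f' 0 * s \<le> \<bar>f' 0\<bar> * \<bar>s\<bar>"
    by (simp add: abs_mult[symmetric])
  also have "\<dots> \<le> (B + L) * G"
    using f'0 s by (intro mult_mono) auto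
  finally have "f' 0 * s \<le> (B + L) * G" .
  moreover have "L * \<bar>s\<bar> powr (1 + a) / (1 + a) \<le> L * G powr (1 + a)"
  proof -
    have "L * \<bar>s\<bar> powr (1 + a) / (1 + a) \<le> L * \<bar>s\<bar> powr (1 + a)"
      using L a by (intro divide_left_mono[of 1 "1 + a", simplified]) auto
    also have "\<dots> \<le> L * G powr (1 + a)"
      using s a L by (intro mult_left_mono powr_mono2) auto
    finally show ?thesis .
  qed
  ultimately show "\<bar>f s\<bar> \<le> B + (B + L) * G + L * G powr (1 + a)"
    using desc[of s] f0 nonneg[of s] by simp
qed

lemma borel_measurable_param_deriv:
  fixes \<phi> \<phi>' :: "real \<Rightarrow> real \<Rightarrow> real"
  assumes \<phi>_meas: "(\<lambda>(y, s). \<phi> y s) \<in> borel_measurable (restrict_space borel (Y \<times> UNIV))"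
    and \<phi>_deriv: "\<And>y s. y \<in> Y \<Longrightarrow> (\<phi> y has_real_derivative \<phi>' y s) (at s)"
  shows "(\<lambda>(y, s). \<phi>' y s) \<in> borel_measurable (restrict_space borel (Y \<times> UNIV))"
proof (rule borel_measurable_LIMSEQ_real)
  define N where "N = restrict_space borel (Y \<times> (UNIV::real set))"
  have shift: "(\<lambda>(y, s). \<phi> y (s + c)) \<in> borel_measurable N" for c :: real
  proof -
    have m: "(\<lambda>p::real\<times>real. (fst p, snd p + c)) \<in> measurable N N"
      unfolding N_def by (intro measurable_restrict_space3 borel_measurable_continuous_onI continuous_intros) auto
    have "(\<lambda>p. (\<lambda>(y, s). \<phi> y s) ((\<lambda>p::real\<times>real. (fst p, snd p + c)) p)) \<in> borel_measurable N"
      using measurable_comp[OF m \<phi>_meas[folded N_def]] by (simp add: comp_def)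
    then show ?thesis by (simp add: case_prod_beta)
  qed
  show "(\<lambda>(y, s). real (Suc n) * (\<phi> y (s + 1 / real (Suc n)) - \<phi> y (s + 0))) \<in> borel_measurable (restrict_space borel (Y \<times> UNIV))" for n
  proof -
    have "(\<lambda>p. real (Suc n) * ((\<lambda>(y, s). \<phi> y (s + 1 / real (Suc n))) p - (\<lambda>(y, s). \<phi> y (s + 0)) p)) \<in> borel_measurable N"
      by (intro borel_measurable_times borel_measurable_const borel_measurable_diff shift)
    then show ?thesis unfolding N_def by (simp add: case_prod_beta)
  qed
  fix p :: "real \<times> real" assume "p \<in> space (restrict_space borel (Y \<times> UNIV))"
  then have y: "fst p \<in> Y" by (auto simp: space_restrict_space)
  have L: "((\<lambda>h. (\<phi> (fst p) (snd p + h) - \<phi> (fst p) (snd p)) / h) \<longlongrightarrow> \<phi>' (fst p) (snd p)) (at 0)"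
    using \<phi>_deriv[OF y, of "snd p"] by (simp add: DERIV_def)
  have S: "(\<lambda>n. 1 / real (Suc n)) \<longlonglongrightarrow> 0" by (rule LIMSEQ_Suc[OF lim_const_over_n])
  have "(\<lambda>n. (\<phi> (fst p) (snd p + 1 / real (Suc n)) - \<phi> (fst p) (snd p)) / (1 / real (Suc n))) \<longlonglongrightarrow> \<phi>' (fst p) (snd p)"
    using L[unfolded LIMSEQ_SEQ_conv[symmetric], rule_format, of "\<lambda>n. 1 / real (Suc n)"] S by auto
  then show "(\<lambda>n. (\<lambda>(y, s). real (Suc n) * (\<phi> y (s + 1 / real (Suc n)) - \<phi> y (s + 0))) p) \<longlonglongrightarrow> (\<lambda>(y, s). \<phi>' y s) p"
    by (simp add: case_prod_beta mult.commute)
qed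

lemma power2_norm_feature_diff:
  assumes K_feat: "\<And>x x'. x \<in> X \<Longrightarrow> x' \<in> X \<Longrightarrow> K x x' = \<Phi> x \<bullet> \<Phi> x'"
    and x: "x \<in> X" and x0: "x0 \<in> X"
  shows "(norm (\<Phi> x - \<Phi> x0))\<^sup>2 = K x x - 2 * K x x0 + K x0 x0"
proof -
  have "(norm (\<Phi> x - \<Phi> x0))\<^sup>2 = \<Phi> x \<bullet> \<Phi> x - 2 * (\<Phi> x \<bullet> \<Phi> x0) + \<Phi> x0 \<bullet> \<Phi> x0"
    by (simp add: power2_norm_eq_inner inner_diff_left inner_diff_right inner_commute[of "\<Phi> x0" "\<Phi> x"])
  then show ?thesis using K_feat[OF x x] K_feat[OF x x0] K_feat[OF x0 x0] by simp
qed

lemma continuous_on_feature_map: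
  fixes \<Phi> :: "'x::topological_space \<Rightarrow> 'h::real_inner"
  assumes K_feat: "\<And>x x'. x \<in> X \<Longrightarrow> x' \<in> X \<Longrightarrow> K x x' = \<Phi> x \<bullet> \<Phi> x'"
    and K_cont: "continuous_on (X \<times> X) (\<lambda>(x, x'). K x x')"
  shows "continuous_on X \<Phi>"
proof -
  have Kdiag: "continuous_on X (\<lambda>x. K x x)"
  proof -
    have "continuous_on X (\<lambda>x. (x, x))" by (intro continuous_intros)
    moreover have "(\<lambda>x. (x, x)) ` X \<subseteq> X \<times> X" by auto
    ultimately show ?thesis using continuous_on_compose2[OF K_cont, of X "\<lambda>x. (x, x)"] by simp
  qed
  have Kx0: "continuous_on X (\<lambda>x. K x x0)" if "x0 \<in> X" for x0
  proof -
    have "continuous_on X (\<lambda>x. (x, x0))" by (intro continuous_intros)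
    moreover have "(\<lambda>x. (x, x0)) ` X \<subseteq> X \<times> X" using that by auto
    ultimately show ?thesis using continuous_on_compose2[OF K_cont, of X "\<lambda>x. (x, x0)"] by simp
  qed
  show ?thesis
    unfolding continuous_on_def
  proof (intro ballI)
    fix x0 assume x0: "x0 \<in> X"
    have kc: "continuous_on X (\<lambda>x. K x x - 2 * K x x0 + K x0 x0)"
      by (intro continuous_on_add continuous_on_diff continuous_on_mult continuous_on_const Kdiag Kx0 x0)
    have eq: "(norm (\<Phi> x - \<Phi> x0))\<^sup>2 = K x x - 2 * K x x0 + K x0 x0" if "x \<in> X" for x
      by (rule power2_norm_feature_diff[OF K_feat that x0])
    have cN: "continuous_on X (\<lambda>x. (norm (\<Phi> x - \<Phi> x0))\<^sup>2)"
      using iffD2[OF continuous_on_cong[OF refl eq] kc] .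
    have "((\<lambda>x. (norm (\<Phi> x - \<Phi> x0))\<^sup>2) \<longlongrightarrow> (norm (\<Phi> x0 - \<Phi> x0))\<^sup>2) (at x0 within X)"
      using cN[unfolded continuous_on_def, rule_format, OF x0] .
    then have "((\<lambda>x. (norm (\<Phi> x - \<Phi> x0))\<^sup>2) \<longlongrightarrow> 0) (at x0 within X)" by simp
    then have "((\<lambda>x. sqrt ((norm (\<Phi> x - \<Phi> x0))\<^sup>2)) \<longlongrightarrow> sqrt 0) (at x0 within X)"
      by (rule tendsto_real_sqrt)
    then have "((\<lambda>x. norm (\<Phi> x - \<Phi> x0)) \<longlongrightarrow> 0) (at x0 within X)" by simp
    then have "((\<lambda>x. \<Phi> x - \<Phi> x0) \<longlongrightarrow> 0) (at x0 within X)"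
      by (simp add: tendsto_norm_zero_iff)
    then show "(\<Phi> \<longlongrightarrow> \<Phi> x0) (at x0 within X)"
      by (simp add: LIM_zero_iff)
  qed
qed

lemma bounded_feature_map:
  assumes K_feat: "\<And>x x'. x \<in> X \<Longrightarrow> x' \<in> X \<Longrightarrow> K x x' = \<Phi> x \<bullet> \<Phi> x'"
    and kappa: "bounded ((\<lambda>x. sqrt (K x x)) ` X)"
  shows "bounded (\<Phi> ` X)"
proof -
  obtain a where a: "\<And>x. x \<in> X \<Longrightarrow> \<bar>sqrt (K x x)\<bar> \<le> a"
    using kappa unfolding bounded_iff by auto
  have "norm (\<Phi> x) \<le> a" if "x \<in> X" for x
    using a[OF that] K_feat[OF that that] by (simp add: norm_eq_sqrt_inner)
  then show ?thesis unfolding bounded_iff by blast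
qed

lemma integral_deriv_nonneg_at_minimizer:
  fixes \<phi> \<phi>' :: "real \<Rightarrow> real \<Rightarrow> real" and y a g :: "'a \<Rightarrow> real"
  assumes M: "prob_space M"
    and y: "\<And>\<zeta>. \<zeta> \<in> space M \<Longrightarrow> y \<zeta> \<in> Y"
    and d: "\<And>y s. y \<in> Y \<Longrightarrow> (\<phi> y has_real_derivative \<phi>' y s) (at s)"
    and h: "\<And>y s s'. y \<in> Y \<Longrightarrow> \<bar>\<phi>' y s - \<phi>' y s'\<bar> \<le> L * \<bar>s - s'\<bar> powr \<alpha>"
    and \<alpha>: "0 < \<alpha>" and L: "0 \<le> L" and G: "0 \<le> G"
    and g: "\<And>\<zeta>. \<zeta> \<in> space M \<Longrightarrow> \<bar>g \<zeta>\<bar> \<le> G"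
    and int: "\<And>\<epsilon>. integrable M (\<lambda>\<zeta>. \<phi> (y \<zeta>) (a \<zeta> + \<epsilon> * g \<zeta>))"
    and int': "integrable M (\<lambda>\<zeta>. \<phi>' (y \<zeta>) (a \<zeta>) * g \<zeta>)"
    and min: "\<And>\<epsilon>. 0 < \<epsilon> \<Longrightarrow>
      (\<integral>\<zeta>. \<phi> (y \<zeta>) (a \<zeta>) \<partial>M) \<le> (\<integral>\<zeta>. \<phi> (y \<zeta>) (a \<zeta> + \<epsilon> * g \<zeta>) \<partial>M)"
  shows "0 \<le> (\<integral>\<zeta>. \<phi>' (y \<zeta>) (a \<zeta>) * g \<zeta> \<partial>M)"
proof -
  interpret prob_space M by (rule M)
  define c where "c = (\<integral>\<zeta>. \<phi>' (y \<zeta>) (a \<zeta>) * g \<zeta> \<partial>M)"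
  have int0: "integrable M (\<lambda>\<zeta>. \<phi> (y \<zeta>) (a \<zeta>))"
    using int[of 0] by simp
  have le: "- c \<le> L * (\<epsilon> * G) powr \<alpha> * G" if \<epsilon>: "0 < \<epsilon>" for \<epsilon>
  proof -
    have pt: "\<phi> (y \<zeta>) (a \<zeta> + \<epsilon> * g \<zeta>) - \<phi> (y \<zeta>) (a \<zeta>) - \<epsilon> * (\<phi>' (y \<zeta>) (a \<zeta>) * g \<zeta>)
        \<le> \<epsilon> * (L * (\<epsilon> * G) powr \<alpha> * G)" if \<zeta>: "\<zeta> \<in> space M" for \<zeta>
      using holder_descent_step_le[OF d[OF y[OF \<zeta>]] h[OF y[OF \<zeta>]] \<alpha> L g[OF \<zeta>] \<epsilon>] .
    have "(\<integral>\<zeta>. \<phi> (y \<zeta>) (a \<zeta> + \<epsilon> * g \<zeta>) \<partial>M) - (\<integral>\<zeta>. \<phi> (y \<zeta>) (a \<zeta>) \<partial>M) - \<epsilon> * c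
        = (\<integral>\<zeta>. \<phi> (y \<zeta>) (a \<zeta> + \<epsilon> * g \<zeta>) - \<phi> (y \<zeta>) (a \<zeta>) - \<epsilon> * (\<phi>' (y \<zeta>) (a \<zeta>) * g \<zeta>) \<partial>M)"
      unfolding c_def using int int0 int' by simp
    also have "\<dots> \<le> (\<integral>\<zeta>. \<epsilon> * (L * (\<epsilon> * G) powr \<alpha> * G) \<partial>M)"
      using int int0 int' pt by (intro integral_mono) auto
    also have "\<dots> = \<epsilon> * (L * (\<epsilon> * G) powr \<alpha> * G)"
      by (simp add: prob_space)
    finally have "\<epsilon> * (- c) \<le> \<epsilon> * (L * (\<epsilon> * G) powr \<alpha> * G)"
      using min[OF \<epsilon>] by (simp add: algebra_simps)
    then show ?thesis using \<epsilon> by (rule mult_left_le_imp_le)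
  qed
  have lim: "((\<lambda>\<epsilon>. L * (\<epsilon> * G) powr \<alpha> * G) \<longlongrightarrow> L * (0 * G) powr \<alpha> * G) (at_right 0)"
    using \<alpha> G by (intro tendsto_intros tendsto_powr') (auto intro!: eventually_at_rightI[of 0 1])
  have "- c \<le> L * (0 * G) powr \<alpha> * G"
    by (rule tendsto_le[OF _ lim tendsto_const]) (auto intro!: eventually_at_rightI[of 0 1] le)
  then show ?thesis unfolding c_def by simp
qed

locale linear_feature_loss = prob_space \<rho>
  for \<rho> :: "('x::topological_space \<times> real) measure" +
  fixes X :: "'x set" and Y :: "real set" and \<Phi> :: "'x \<Rightarrow> 'h::real_inner"
    and \<phi> \<phi>' :: "real \<Rightarrow> real \<Rightarrow> real" and \<alpha> L :: real
  assumes sets_\<rho>: "sets \<rho> = sets (restrict_space borel (X \<times> Y))"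
    and \<Phi>_cont: "continuous_on X \<Phi>"
    and \<Phi>_bounded: "bounded (\<Phi> ` X)"
    and \<phi>_nonneg: "\<And>y s. y \<in> Y \<Longrightarrow> 0 \<le> \<phi> y s"
    and \<phi>_meas: "(\<lambda>(y, s). \<phi> y s) \<in> borel_measurable (restrict_space borel (Y \<times> UNIV))"
    and \<phi>_zero_bounded: "\<exists>B. \<forall>y\<in>Y. \<phi> y 0 \<le> B"
    and \<phi>_convex: "\<And>y. y \<in> Y \<Longrightarrow> convex_on UNIV (\<phi> y)"
    and \<phi>_deriv: "\<And>y s. y \<in> Y \<Longrightarrow> (\<phi> y has_real_derivative \<phi>' y s) (at s)"
    and hoelder: "\<And>y s s'. y \<in> Y \<Longrightarrow> \<bar>\<phi>' y s - \<phi>' y s'\<bar> \<le> L * \<bar>s - s'\<bar> powr \<alpha>"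
    and \<alpha>: "0 < \<alpha>" "\<alpha> \<le> 1" and L: "0 < L"
begin

lemma space_eq: "space \<rho> = X \<times> Y"
  using sets_eq_imp_space_eq[OF sets_\<rho>] by (simp add: space_restrict_space)

lemma fst_in_X: "\<zeta> \<in> space \<rho> \<Longrightarrow> fst \<zeta> \<in> X" and snd_in_Y: "\<zeta> \<in> space \<rho> \<Longrightarrow> snd \<zeta> \<in> Y"
  by (simp_all add: space_eq mem_Times_iff)

lemma continuous_on_feature: "continuous_on (X \<times> Y) (\<lambda>\<zeta>. w \<bullet> \<Phi> (fst \<zeta>))"
  by (rule continuous_on_compose2[of X "\<lambda>x. w \<bullet> \<Phi> x"])
    (auto intro!: continuous_intros continuous_on_id \<Phi>_cont)

lemma measurable_feature: "(\<lambda>\<zeta>. w \<bullet> \<Phi> (fst \<zeta>)) \<in> borel_measurable \<rho>"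
  using borel_measurable_continuous_on_restrict[OF continuous_on_feature]
  by (simp add: measurable_cong_sets[OF sets_\<rho> refl])

lemma measurable_loss_comp:
  assumes "(\<lambda>(y, s). \<psi> y s) \<in> borel_measurable (restrict_space borel (Y \<times> UNIV))"
  shows "(\<lambda>\<zeta>. \<psi> (snd \<zeta>) (w \<bullet> \<Phi> (fst \<zeta>))) \<in> borel_measurable \<rho>"
proof -
  have "(\<lambda>\<zeta>. (snd \<zeta>, w \<bullet> \<Phi> (fst \<zeta>))) \<in> measurable \<rho> (restrict_space borel (Y \<times> UNIV))"
  proof (rule measurable_restrict_space2)
    show "(\<lambda>\<zeta>. (snd \<zeta>, w \<bullet> \<Phi> (fst \<zeta>))) \<in> space \<rho> \<rightarrow> Y \<times> UNIV"
      using snd_in_Y by auto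
    have "continuous_on (X \<times> Y) (\<lambda>\<zeta>. (snd \<zeta>, w \<bullet> \<Phi> (fst \<zeta>)))"
      by (intro continuous_on_Pair continuous_on_snd continuous_on_id continuous_on_feature)
    from borel_measurable_continuous_on_restrict[OF this]
    show "(\<lambda>\<zeta>. (snd \<zeta>, w \<bullet> \<Phi> (fst \<zeta>))) \<in> borel_measurable \<rho>"
      by (simp add: measurable_cong_sets[OF sets_\<rho> refl])
  qed
  from measurable_comp[OF this assms] show ?thesis by (simp add: comp_def)
qed

lemma feature_bound: "\<exists>C\<ge>0. \<forall>x\<in>X. norm (\<Phi> x) \<le> C"
proof -
  obtain a where "\<And>x. x \<in> X \<Longrightarrow> norm (\<Phi> x) \<le> a"
    using \<Phi>_bounded unfolding bounded_iff by blast
  then show ?thesis by (intro exI[of _ "max a 0"]) (auto simp: le_max_iff_disj)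
qed

lemma feature_inner_bound: "\<exists>G\<ge>0. \<forall>\<zeta>\<in>space \<rho>. \<bar>w \<bullet> \<Phi> (fst \<zeta>)\<bar> \<le> G"
proof -
  obtain C where C: "0 \<le> C" "\<And>x. x \<in> X \<Longrightarrow> norm (\<Phi> x) \<le> C"
    using feature_bound by blast
  have "\<bar>w \<bullet> \<Phi> (fst \<zeta>)\<bar> \<le> norm w * C" if "\<zeta> \<in> space \<rho>" for \<zeta>
    using Cauchy_Schwarz_ineq2[of w "\<Phi> (fst \<zeta>)"] mult_left_mono[OF C(2)[OF fst_in_X[OF that]]]
    by (meson norm_ge_zero order.trans)
  with C(1) show ?thesis by (intro exI[of _ "norm w * C"]) auto
qed

lemma loss_bounded:
  "\<exists>M. \<forall>\<zeta>\<in>space \<rho>. \<bar>\<phi> (snd \<zeta>) (w \<bullet> \<Phi> (fst \<zeta>))\<bar> \<le> M \<and> \<bar>\<phi>' (snd \<zeta>) (w \<bullet> \<Phi> (fst \<zeta>))\<bar> \<le> M"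
proof -
  obtain G where s: "\<And>\<zeta>. \<zeta> \<in> space \<rho> \<Longrightarrow> \<bar>w \<bullet> \<Phi> (fst \<zeta>)\<bar> \<le> G"
    using feature_inner_bound by blast
  obtain B where B: "\<And>y. y \<in> Y \<Longrightarrow> \<phi> y 0 \<le> B" using \<phi>_zero_bounded by blast
  note bounds = nonneg_holder_bounds[OF \<phi>_deriv hoelder \<alpha>(1) less_imp_le[OF L] \<phi>_nonneg B s]
  show ?thesis
    by (rule exI[of _ "max (B + L + L * G powr \<alpha>) (B + (B + L) * G + L * G powr (1 + \<alpha>))"])
      (use bounds snd_in_Y in \<open>fastforce simp: le_max_iff_disj\<close>)
qed

lemma integrable_bounded:
  assumes "f \<in> borel_measurable \<rho>" "\<forall>\<zeta>\<in>space \<rho>. \<bar>f \<zeta>\<bar> \<le> M"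
  shows "integrable \<rho> (f :: _ \<Rightarrow> real)"
  by (rule integrable_const_bound[where B=M]) (use assms in \<open>auto intro!: AE_I2\<close>)

lemma integrable_loss: "integrable \<rho> (\<lambda>\<zeta>. \<phi> (snd \<zeta>) (w \<bullet> \<Phi> (fst \<zeta>)))"
  using loss_bounded[of w] by (auto intro: integrable_bounded measurable_loss_comp \<phi>_meas)

lemma measurable_loss_deriv: "(\<lambda>\<zeta>. \<phi>' (snd \<zeta>) (w \<bullet> \<Phi> (fst \<zeta>))) \<in> borel_measurable \<rho>"
  by (rule measurable_loss_comp[OF borel_measurable_param_deriv[OF \<phi>_meas \<phi>_deriv]])

lemma integrable_deriv_powr:
  assumes "0 \<le> p"
  shows "integrable \<rho> (\<lambda>\<zeta>. \<bar>\<phi>' (snd \<zeta>) (w \<bullet> \<Phi> (fst \<zeta>))\<bar> powr p)"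
proof -
  obtain M where M: "\<forall>\<zeta>\<in>space \<rho>. \<bar>\<phi>' (snd \<zeta>) (w \<bullet> \<Phi> (fst \<zeta>))\<bar> \<le> M"
    using loss_bounded[of w] by blast
  show ?thesis
    by (rule integrable_bounded[where M="M powr p"])
      (use M assms in \<open>auto intro!: measurable_abs_powr measurable_loss_deriv powr_mono2\<close>)
qed

lemma integrable_deriv_mult_feature:
  "integrable \<rho> (\<lambda>\<zeta>. \<phi>' (snd \<zeta>) (w \<bullet> \<Phi> (fst \<zeta>)) * (v \<bullet> \<Phi> (fst \<zeta>)))"
proof -
  obtain M where M: "\<forall>\<zeta>\<in>space \<rho>. \<bar>\<phi>' (snd \<zeta>) (w \<bullet> \<Phi> (fst \<zeta>))\<bar> \<le> M"
    using loss_bounded[of w] by blast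
  obtain M' where M': "\<forall>\<zeta>\<in>space \<rho>. \<bar>v \<bullet> \<Phi> (fst \<zeta>)\<bar> \<le> M'"
    using feature_inner_bound by blast
  show ?thesis
    by (rule integrable_bounded[where M="M * M'"])
      (use M M' in \<open>auto simp: abs_mult intro!: mult_mono borel_measurable_times measurable_loss_deriv measurable_feature\<close>)
qed

lemma deriv_orthogonal_at_minimizer:
  assumes min: "\<And>w. gen_err \<rho> \<phi> (\<lambda>x. wH \<bullet> \<Phi> x) \<le> gen_err \<rho> \<phi> (\<lambda>x. w \<bullet> \<Phi> x)"
  shows "(\<integral>\<zeta>. \<phi>' (snd \<zeta>) (wH \<bullet> \<Phi> (fst \<zeta>)) * (v \<bullet> \<Phi> (fst \<zeta>)) \<partial>\<rho>) = 0"
proof -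
  have shift: "(wH + \<epsilon> *\<^sub>R u) \<bullet> \<Phi> x = wH \<bullet> \<Phi> x + \<epsilon> * (u \<bullet> \<Phi> x)" for \<epsilon> u x
    by (simp add: inner_add_left)
  have nonneg: "0 \<le> (\<integral>\<zeta>. \<phi>' (snd \<zeta>) (wH \<bullet> \<Phi> (fst \<zeta>)) * (u \<bullet> \<Phi> (fst \<zeta>)) \<partial>\<rho>)" for u
  proof -
    obtain G where G: "0 \<le> G" "\<And>\<zeta>. \<zeta> \<in> space \<rho> \<Longrightarrow> \<bar>u \<bullet> \<Phi> (fst \<zeta>)\<bar> \<le> G"
      using feature_inner_bound by blast
    show ?thesis
    proof (rule integral_deriv_nonneg_at_minimizer[OF prob_space_axioms snd_in_Y \<phi>_deriv hoelder
          \<alpha>(1) less_imp_le[OF L] G])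
      show "integrable \<rho> (\<lambda>\<zeta>. \<phi> (snd \<zeta>) (wH \<bullet> \<Phi> (fst \<zeta>) + \<epsilon> * (u \<bullet> \<Phi> (fst \<zeta>))))" for \<epsilon>
        using integrable_loss[of "wH + \<epsilon> *\<^sub>R u"] by (simp only: shift)
      show "(\<integral>\<zeta>. \<phi> (snd \<zeta>) (wH \<bullet> \<Phi> (fst \<zeta>)) \<partial>\<rho>)
          \<le> (\<integral>\<zeta>. \<phi> (snd \<zeta>) (wH \<bullet> \<Phi> (fst \<zeta>) + \<epsilon> * (u \<bullet> \<Phi> (fst \<zeta>))) \<partial>\<rho>)" for \<epsilon>
        using min[of "wH + \<epsilon> *\<^sub>R u"] by (simp only: gen_err_def shift)
    qed (simp_all add: integrable_deriv_mult_feature)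
  qed
  have "(\<integral>\<zeta>. \<phi>' (snd \<zeta>) (wH \<bullet> \<Phi> (fst \<zeta>)) * ((- v) \<bullet> \<Phi> (fst \<zeta>)) \<partial>\<rho>)
      = - (\<integral>\<zeta>. \<phi>' (snd \<zeta>) (wH \<bullet> \<Phi> (fst \<zeta>)) * (v \<bullet> \<Phi> (fst \<zeta>)) \<partial>\<rho>)"
    by (simp add: inner_minus_left)
  with nonneg[of v] nonneg[of "- v"] show ?thesis by linarith
qed

lemma deriv_moment_le_excess_risk:
  assumes min: "\<And>w. gen_err \<rho> \<phi> (\<lambda>x. wH \<bullet> \<Phi> x) \<le> gen_err \<rho> \<phi> (\<lambda>x. w \<bullet> \<Phi> x)"
    and \<beta>: "0 < \<beta>" "\<beta> \<le> 1"
  shows "(\<integral>\<zeta>. \<bar>\<phi>' (snd \<zeta>) (w \<bullet> \<Phi> (fst \<zeta>))\<bar> powr (1 + \<beta>) \<partial>\<rho>)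
    \<le> 2 powr \<beta> * L powr (1 / \<alpha>) * (1 + \<beta>)
        * (gen_err \<rho> \<phi> (\<lambda>x. w \<bullet> \<Phi> x) - gen_err \<rho> \<phi> (\<lambda>x. wH \<bullet> \<Phi> x))
      + 2 powr \<beta> * (1 - \<alpha> * \<beta>) / (1 + \<alpha>)
      + 2 powr \<beta> * (\<integral>\<zeta>. \<bar>\<phi>' (snd \<zeta>) (wH \<bullet> \<Phi> (fst \<zeta>))\<bar> powr (1 + \<beta>) \<partial>\<rho>)"
proof -
  define c1 where "c1 = 2 powr \<beta> * L powr (1 / \<alpha>) * (1 + \<beta>)"
  define c2 where "c2 = 2 powr \<beta> * (1 - \<alpha> * \<beta>) / (1 + \<alpha>)"
  define loss where "loss u \<zeta> = \<phi> (snd \<zeta>) (u \<bullet> \<Phi> (fst \<zeta>))" for u \<zeta>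
  define dloss where "dloss u \<zeta> = \<phi>' (snd \<zeta>) (u \<bullet> \<Phi> (fst \<zeta>))" for u \<zeta>
  have pointwise: "\<bar>dloss w \<zeta>\<bar> powr (1 + \<beta>)
      \<le> c1 * (loss w \<zeta> - loss wH \<zeta> - dloss wH \<zeta> * ((w - wH) \<bullet> \<Phi> (fst \<zeta>)))
        + c2 + 2 powr \<beta> * \<bar>dloss wH \<zeta>\<bar> powr (1 + \<beta>)" if "\<zeta> \<in> space \<rho>" for \<zeta>
    using holder_deriv_powr_le[OF \<phi>_convex \<phi>_deriv hoelder \<alpha> L \<beta>, OF snd_in_Y snd_in_Y snd_in_Y, OF that that that,
        of "w \<bullet> \<Phi> (fst \<zeta>)" "wH \<bullet> \<Phi> (fst \<zeta>)"]
    unfolding c1_def c2_def loss_def dloss_def by (simp add: inner_diff_left)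
  have ints: "integrable \<rho> (loss u)" "integrable \<rho> (\<lambda>\<zeta>. dloss wH \<zeta> * ((w - wH) \<bullet> \<Phi> (fst \<zeta>)))"
    "integrable \<rho> (\<lambda>\<zeta>. \<bar>dloss u \<zeta>\<bar> powr (1 + \<beta>))" for u
    unfolding loss_def dloss_def using \<beta>
    by (auto intro: integrable_loss integrable_deriv_mult_feature integrable_deriv_powr)
  have "(\<integral>\<zeta>. \<bar>dloss w \<zeta>\<bar> powr (1 + \<beta>) \<partial>\<rho>)
      \<le> (\<integral>\<zeta>. c1 * (loss w \<zeta> - loss wH \<zeta> - dloss wH \<zeta> * ((w - wH) \<bullet> \<Phi> (fst \<zeta>)))
        + c2 + 2 powr \<beta> * \<bar>dloss wH \<zeta>\<bar> powr (1 + \<beta>) \<partial>\<rho>)"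
    using ints pointwise by (intro integral_mono) auto
  also have "\<dots> = c1 * ((\<integral>\<zeta>. loss w \<zeta> \<partial>\<rho>) - (\<integral>\<zeta>. loss wH \<zeta> \<partial>\<rho>)
        - (\<integral>\<zeta>. dloss wH \<zeta> * ((w - wH) \<bullet> \<Phi> (fst \<zeta>)) \<partial>\<rho>))
      + c2 + 2 powr \<beta> * (\<integral>\<zeta>. \<bar>dloss wH \<zeta>\<bar> powr (1 + \<beta>) \<partial>\<rho>)"
    using ints by (simp add: prob_space)
  also have "(\<integral>\<zeta>. dloss wH \<zeta> * ((w - wH) \<bullet> \<Phi> (fst \<zeta>)) \<partial>\<rho>) = 0"
    unfolding dloss_def by (rule deriv_orthogonal_at_minimizer[OF min])
  finally show ?thesis
    unfolding c1_def c2_def loss_def dloss_def gen_err_def by simp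
qed

end

primrec ogd_weight :: "('x \<Rightarrow> 'h::real_inner) \<Rightarrow> (real \<Rightarrow> real \<Rightarrow> real) \<Rightarrow> (nat \<Rightarrow> real)
                 \<Rightarrow> (nat \<Rightarrow> 'x \<times> real) \<Rightarrow> nat \<Rightarrow> 'h" where
  "ogd_weight \<Phi> \<phi>' \<eta> z 0 = 0"
| "ogd_weight \<Phi> \<phi>' \<eta> z (Suc t) =
     (if t = 0 then 0
      else ogd_weight \<Phi> \<phi>' \<eta> z t
        - (\<eta> t * \<phi>' (snd (z t)) (ogd_weight \<Phi> \<phi>' \<eta> z t \<bullet> \<Phi> (fst (z t)))) *\<^sub>R \<Phi> (fst (z t)))"

lemma ogd_eq_inner_ogd_weight:
  assumes K_feat: "\<And>x x'. x \<in> X \<Longrightarrow> x' \<in> X \<Longrightarrow> K x x' = \<Phi> x \<bullet> \<Phi> x'"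
    and z: "\<And>i. fst (z i) \<in> X" and x: "x \<in> X"
  shows "ogd K \<phi>' \<eta> z t x = ogd_weight \<Phi> \<phi>' \<eta> z t \<bullet> \<Phi> x"
  using x
proof (induction t arbitrary: x)
  case 0 then show ?case by simp
next
  case (Suc t)
  show ?case
    using Suc.IH[OF z] Suc.IH[OF Suc.prems] K_feat[OF z Suc.prems]
    by (simp add: inner_diff_left)
qed

theorem lemma2:
  fixes X :: "(real^'d) set" and Y :: "real set"
    and \<rho> :: "((real^'d) \<times> real) measure"
    and K :: "real^'d \<Rightarrow> real^'d \<Rightarrow> real"
    and \<Phi> :: "real^'d \<Rightarrow> 'h::{real_inner, complete_space}"
    and \<phi> \<phi>' :: "real \<Rightarrow> real \<Rightarrow> real"
    and wH :: 'h
    and \<eta> :: "nat \<Rightarrow> real"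
    and z :: "nat \<Rightarrow> (real^'d) \<times> real"
    and \<alpha> \<beta> L :: real and t :: nat
  assumes prob: "prob_space \<rho>"
    and sets_\<rho>: "sets \<rho> = sets (restrict_space borel (X \<times> Y))"
    \<comment> \<open>RKHS H_K, given through a feature map: K x x' = <Phi x, Phi x'>, with the span of
        Phi(X) dense, so H_K = { x \<mapsto> <w, Phi x> | w }\<close>
    and K_feat: "\<And>x x'. x \<in> X \<Longrightarrow> x' \<in> X \<Longrightarrow> K x x' = \<Phi> x \<bullet> \<Phi> x'"
    and dense: "closure (span (\<Phi> ` X)) = UNIV"
    and K_cont: "continuous_on (X \<times> X) (\<lambda>(x, x'). K x x')"
    and kappa: "bounded ((\<lambda>x. sqrt (K x x)) ` X)"
    and \<phi>_nonneg: "\<And>y s. y \<in> Y \<Longrightarrow> \<phi> y s \<ge> 0"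
    and \<phi>_meas: "(\<lambda>(y, s). \<phi> y s) \<in> borel_measurable (restrict_space borel (Y \<times> UNIV))"
    and \<phi>_convex: "\<And>y. y \<in> Y \<Longrightarrow> convex_on UNIV (\<phi> y)"
    and \<phi>_deriv: "\<And>y s. y \<in> Y \<Longrightarrow> (\<phi> y has_real_derivative \<phi>' y s) (at s)"
    and \<alpha>: "0 < \<alpha>" "\<alpha> \<le> 1" and L: "L > 0"
    and hoelder: "\<And>y s s'. y \<in> Y \<Longrightarrow> \<bar>\<phi>' y s - \<phi>' y s'\<bar> \<le> L * \<bar>s - s'\<bar> powr \<alpha>"
    and fH_min: "\<And>w. gen_err \<rho> \<phi> (\<lambda>x. wH \<bullet> \<Phi> x) \<le> gen_err \<rho> \<phi> (\<lambda>x. w \<bullet> \<Phi> x)"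
    and bdd0: "\<exists>B. \<forall>y\<in>Y. \<phi> y 0 \<le> B"
    and bddH: "\<exists>B. \<forall>x\<in>X. \<forall>y\<in>Y. \<phi> y (wH \<bullet> \<Phi> x) \<le> B"
    and \<beta>: "0 < \<beta>" "\<beta> \<le> 1"
    and \<eta>_pos: "\<And>i. \<eta> i > 0"
    and z_in: "\<And>i. z i \<in> X \<times> Y"
    and t: "t \<ge> 1"
  shows "(\<integral>\<zeta>. \<bar>\<phi>' (snd \<zeta>) (ogd K \<phi>' \<eta> z t (fst \<zeta>))\<bar> powr (1 + \<beta>) \<partial>\<rho>)
         \<le> 2 powr \<beta> * L powr (1 / \<alpha>) * (1 + \<beta>)
             * (gen_err \<rho> \<phi> (ogd K \<phi>' \<eta> z t) - gen_err \<rho> \<phi> (\<lambda>x. wH \<bullet> \<Phi> x))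
           + 2 powr \<beta> * (1 - \<alpha> * \<beta>) / (1 + \<alpha>)
           + 2 powr \<beta> * (\<integral>\<zeta>. \<bar>\<phi>' (snd \<zeta>) (wH \<bullet> \<Phi> (fst \<zeta>))\<bar> powr (1 + \<beta>) \<partial>\<rho>)"
proof -
  interpret linear_feature_loss \<rho> X Y \<Phi> \<phi> \<phi>' \<alpha> L
    using prob sets_\<rho> continuous_on_feature_map[OF K_feat K_cont] bounded_feature_map[OF K_feat kappa]
      \<phi>_nonneg \<phi>_meas bdd0 \<phi>_convex \<phi>_deriv hoelder \<alpha> L
    by (simp add: linear_feature_loss_def linear_feature_loss_axioms_def)
  define W where "W = ogd_weight \<Phi> \<phi>' \<eta> z t"
  have ogd_W: "ogd K \<phi>' \<eta> z t (fst \<zeta>) = W \<bullet> \<Phi> (fst \<zeta>)" if "\<zeta> \<in> space \<rho>" for \<zeta>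
    unfolding W_def using z_in fst_in_X[OF that]
    by (intro ogd_eq_inner_ogd_weight[OF K_feat]) (auto simp: mem_Times_iff)
  have "(\<integral>\<zeta>. \<bar>\<phi>' (snd \<zeta>) (ogd K \<phi>' \<eta> z t (fst \<zeta>))\<bar> powr (1 + \<beta>) \<partial>\<rho>)
      = (\<integral>\<zeta>. \<bar>\<phi>' (snd \<zeta>) (W \<bullet> \<Phi> (fst \<zeta>))\<bar> powr (1 + \<beta>) \<partial>\<rho>)"
    by (intro Bochner_Integration.integral_cong) (simp_all add: ogd_W)
  moreover have "gen_err \<rho> \<phi> (ogd K \<phi>' \<eta> z t) = gen_err \<rho> \<phi> (\<lambda>x. W \<bullet> \<Phi> x)"
    unfolding gen_err_def by (intro Bochner_Integration.integral_cong) (simp_all add: ogd_W)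
  ultimately show ?thesis
    using deriv_moment_le_excess_risk[OF fH_min \<beta>, of W] by simp
qed

end
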